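(* Let $\mathcal L$ be an expansion of the language $\langle +,<,0\rangle$ of ordered groups and let $G$ be an $\mathcal L$-structure whose reduct is a densely ordered abelian group. Then $G$ is definably complete if and only if $G$ satisfies the scheme DCI.
   Context: A subset of $G$ is definable if it is defined by an $\mathcal L$-formula with parameters from $G$. A Dedekind cut is a nonempty downward closed subset $C\subseteq G$; a gap is a cut $C\neq G$ with no least upper bound in $G$. $G$ is definably complete if it has no definable gap. For an $\mathcal L$-formula $\varphi(v,\bar w)$, $\mathrm{DCI}_\varphi$ is the sentence $\forall\bar w\Big(\big(\exists s\,\forall v<s\,\varphi(v,\bar w)\ \wedge\ \forall v\big(\forall s<v\,\varphi(s,\bar w)\to\exists u>v\,\forall s<u\,\varphi(s,\bar w)\big)\big)\to\forall v\,\varphi(v,\bar w)\Big)$, and DCI is the scheme $\{\mathrm{DCI}_\varphi:\varphi(v,\bar w)\text{ an }\mathcal L\text{-formula}\}$. *)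

theory Defs
  imports Main
begin

datatype 'f trm =
    Var nat
  | Zero
  | Plus "'f trm" "'f trm"
  | Fn 'f "'f trm list"

datatype ('f, 'r) fml =
    Eq "'f trm" "'f trm"
  | Less "'f trm" "'f trm"
  | Rel 'r "'f trm list"
  | Neg "('f, 'r) fml"
  | Conj "('f, 'r) fml" "('f, 'r) fml"
  | Ex nat "('f, 'r) fml"

text \<open>An L-structure on the ordered group 'a: interpretations FI of the extra function
  symbols and RI of the extra relation symbols; 0, + and < are interpreted by the
  ordered group structure of 'a.\<close>
fun teval :: "('f \<Rightarrow> 'a list \<Rightarrow> 'a) \<Rightarrow> (nat \<Rightarrow> 'a) \<Rightarrow> 'f trm \<Rightarrow> 'a::{ordered_ab_group_add}" where
  "teval FI e (Var n) = e n"
| "teval FI e Zero = 0"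
| "teval FI e (Plus s t) = teval FI e s + teval FI e t"
| "teval FI e (Fn f ts) = FI f (map (teval FI e) ts)"

fun sat :: "('f \<Rightarrow> 'a list \<Rightarrow> 'a) \<Rightarrow> ('r \<Rightarrow> 'a list \<Rightarrow> bool) \<Rightarrow> (nat \<Rightarrow> 'a::ordered_ab_group_add)
            \<Rightarrow> ('f, 'r) fml \<Rightarrow> bool" where
  "sat FI RI e (Eq s t) = (teval FI e s = teval FI e t)"
| "sat FI RI e (Less s t) = (teval FI e s < teval FI e t)"
| "sat FI RI e (Rel r ts) = RI r (map (teval FI e) ts)"
| "sat FI RI e (Neg \<phi>) = (\<not> sat FI RI e \<phi>)"
| "sat FI RI e (Conj \<phi> \<psi>) = (sat FI RI e \<phi> \<and> sat FI RI e \<psi>)"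
| "sat FI RI e (Ex n \<phi>) = (\<exists>a. sat FI RI (e(n := a)) \<phi>)"

text \<open>A subset of G is definable (with parameters) if it is the set defined by a formula
  \<open>\<phi>(v, w)\<close> in the variable v, the other variables being assigned parameters by e.\<close>
definition definable :: "('f \<Rightarrow> 'a list \<Rightarrow> 'a) \<Rightarrow> ('r \<Rightarrow> 'a list \<Rightarrow> bool)
     \<Rightarrow> 'a::ordered_ab_group_add set \<Rightarrow> bool" where
  "definable FI RI X \<longleftrightarrow>
     (\<exists>(\<phi> :: ('f, 'r) fml) v e. X = {a. sat FI RI (e(v := a)) \<phi>})"

definition dedekind_cut :: "'a::linorder set \<Rightarrow> bool" where
  "dedekind_cut C \<longleftrightarrow> C \<noteq> {} \<and> (\<forall>x\<in>C. \<forall>y. y \<le> x \<longrightarrow> y \<in> C)"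

definition is_lub :: "'a::linorder set \<Rightarrow> 'a \<Rightarrow> bool" where
  "is_lub C b \<longleftrightarrow> (\<forall>c\<in>C. c \<le> b) \<and> (\<forall>b'. (\<forall>c\<in>C. c \<le> b') \<longrightarrow> b \<le> b')"

definition gap :: "'a::linorder set \<Rightarrow> bool" where
  "gap C \<longleftrightarrow> dedekind_cut C \<and> C \<noteq> UNIV \<and> \<not> (\<exists>b. is_lub C b)"

definition definably_complete :: "('f \<Rightarrow> 'a::linordered_ab_group_add list \<Rightarrow> 'a) \<Rightarrow> ('r \<Rightarrow> 'a list \<Rightarrow> bool)
     \<Rightarrow> bool" where
  "definably_complete FI RI \<longleftrightarrow>
     \<not> (\<exists>C :: 'a set. definable FI RI C \<and> gap C)"

text \<open>G \<Turnstile> DCI_\<phi>, for \<open>\<phi>(v, w)\<close> with distinguished variable v, the remaining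
  variables w being universally quantified (ranging over all assignments e).\<close>
definition sat_DCI :: "('f \<Rightarrow> 'a::linordered_ab_group_add list \<Rightarrow> 'a) \<Rightarrow> ('r \<Rightarrow> 'a list \<Rightarrow> bool)
     \<Rightarrow> ('f, 'r) fml \<Rightarrow> nat \<Rightarrow> bool" where
  "sat_DCI FI RI \<phi> v \<longleftrightarrow>
     (\<forall>e :: nat \<Rightarrow> 'a.
        ((\<exists>s. \<forall>x<s. sat FI RI (e(v := x)) \<phi>) \<and>
         (\<forall>x. (\<forall>s<x. sat FI RI (e(v := s)) \<phi>) \<longrightarrow>
              (\<exists>u>x. \<forall>s<u. sat FI RI (e(v := s)) \<phi>)))
        \<longrightarrow> (\<forall>x. sat FI RI (e(v := x)) \<phi>))"

definition sat_DCI_scheme :: "('f \<Rightarrow> 'a::linordered_ab_group_add list \<Rightarrow> 'a) \<Rightarrow> ('r \<Rightarrow> 'a list \<Rightarrow> bool) \<Rightarrow> bool" where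
  "sat_DCI_scheme FI RI \<longleftrightarrow>
     (\<forall>(\<phi> :: ('f, 'r) fml) v. sat_DCI FI RI \<phi> v)"

end

theory Submission
  imports Defs
begin

text \<open>Call \<open>P\<close> continuously inductive if it holds on some ray \<open>(-\<infinity>, s)\<close> and, whenever
  it holds on \<open>(-\<infinity>, x)\<close>, it holds on some \<open>(-\<infinity>, u)\<close> with \<open>u > x\<close>.  Then the set of
  points below which \<open>P\<close> holds is a Dedekind cut that contains its supremum if it has one,
  and the inductive step pushes past that supremum; so \<open>P\<close> holds everywhere unless this
  cut is a gap.  Conversely, a gap is itself continuously inductive but not everything.
  The cut is definable from \<open>P\<close>, so the two schemes coincide.\<close>

fun tvars :: "'f trm \<Rightarrow> nat set" where
  "tvars (Var n) = {n}"
| "tvars Zero = {}"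
| "tvars (Plus s t) = tvars s \<union> tvars t"
| "tvars (Fn f ts) = \<Union> (set (map tvars ts))"

fun fvars :: "('f, 'r) fml \<Rightarrow> nat set" where
  "fvars (Eq s t) = tvars s \<union> tvars t"
| "fvars (Less s t) = tvars s \<union> tvars t"
| "fvars (Rel r ts) = \<Union> (set (map tvars ts))"
| "fvars (Neg \<phi>) = fvars \<phi>"
| "fvars (Conj \<phi> \<psi>) = fvars \<phi> \<union> fvars \<psi>"
| "fvars (Ex n \<phi>) = insert n (fvars \<phi>)"

lemma finite_tvars: "finite (tvars t)"
  by (induction t) auto

lemma finite_fvars: "finite (fvars \<phi>)"
  by (induction \<phi>) (auto simp: finite_tvars)

lemma teval_cong: "(\<And>n. n \<in> tvars t \<Longrightarrow> e n = e' n) \<Longrightarrow> teval FI e t = teval FI e' t"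
proof (induction t)
  case (Fn f ts)
  have eq: "map (teval FI e) ts = map (teval FI e') ts"
    using Fn by (intro list.map_cong0) auto
  show ?case
    unfolding teval.simps eq ..
qed auto

lemma sat_cong: "(\<And>n. n \<in> fvars \<phi> \<Longrightarrow> e n = e' n) \<Longrightarrow> sat FI RI e \<phi> = sat FI RI e' \<phi>"
proof (induction \<phi> arbitrary: e e')
  case (Eq s t)
  have "teval FI e s = teval FI e' s" "teval FI e t = teval FI e' t"
    using Eq by (intro teval_cong; simp)+
  then show ?case by simp
next
  case (Less s t)
  have "teval FI e s = teval FI e' s" "teval FI e t = teval FI e' t"
    using Less by (intro teval_cong; simp)+
  then show ?case by simp
next
  case (Rel r ts)
  have eq: "map (teval FI e) ts = map (teval FI e') ts"
    using Rel by (intro list.map_cong0 teval_cong) auto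
  show ?case
    unfolding sat.simps eq ..
next
  case (Neg \<phi>)
  have "sat FI RI e \<phi> = sat FI RI e' \<phi>"
    using Neg.prems by (intro Neg.IH) simp
  then show ?case by simp
next
  case (Conj \<phi> \<psi>)
  have "sat FI RI e \<phi> = sat FI RI e' \<phi>" "sat FI RI e \<psi> = sat FI RI e' \<psi>"
    using Conj.prems by (intro Conj.IH; simp)+
  then show ?case by simp
next
  case (Ex n \<phi>)
  have "sat FI RI (e(n := a)) \<phi> = sat FI RI (e'(n := a)) \<phi>" for a
    using Ex.prems by (intro Ex.IH) simp
  then show ?case by simp
qed

definition initial_set :: "'a::ord set \<Rightarrow> 'a set" where
  "initial_set P = {x. \<forall>s<x. s \<in> P}"

lemma definable_initial_set:
  fixes FI :: "'f \<Rightarrow> 'a::ordered_ab_group_add list \<Rightarrow> 'a"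
    and RI :: "'r \<Rightarrow> 'a list \<Rightarrow> bool"
  assumes "definable FI RI P"
  shows "definable FI RI (initial_set P)"
proof -
  obtain \<phi> :: "('f, 'r) fml" and v e where P: "P = {a. sat FI RI (e(v := a)) \<phi>}"
    using assms unfolding definable_def by blast
  obtain w where w: "w \<notin> insert v (fvars \<phi>)"
    using finite_fvars[of \<phi>] by (meson ex_new_if_finite finite_insert infinite_UNIV_nat)
  define \<psi> :: "('f, 'r) fml" where "\<psi> = Neg (Ex v (Conj (Less (Var v) (Var w)) (Neg \<phi>)))"
  have "sat FI RI (e(w := a, v := s)) \<phi> = sat FI RI (e(v := s)) \<phi>" for a s
    using w by (intro sat_cong) auto
  moreover have "w \<noteq> v"
    using w by blast
  ultimately have "initial_set P = {a. sat FI RI (e(w := a)) \<psi>}"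
    unfolding initial_set_def P \<psi>_def by auto
  then show ?thesis
    unfolding definable_def by blast
qed

definition continuous_inductive :: "'a::ord set \<Rightarrow> bool" where
  "continuous_inductive P \<longleftrightarrow>
     (\<exists>s. \<forall>x<s. x \<in> P) \<and> (\<forall>x. (\<forall>s<x. s \<in> P) \<longrightarrow> (\<exists>u>x. \<forall>s<u. s \<in> P))"

lemma sat_DCI_iff:
  "sat_DCI FI RI \<phi> v \<longleftrightarrow>
     (\<forall>e. continuous_inductive {a. sat FI RI (e(v := a)) \<phi>} \<longrightarrow>
          {a. sat FI RI (e(v := a)) \<phi>} = UNIV)"
  unfolding sat_DCI_def continuous_inductive_def by (simp add: set_eq_iff)

lemma lub_mem_initial_set:
  fixes b :: "'a::linorder"
  assumes "is_lub (initial_set P) b"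
  shows "b \<in> initial_set P"
proof -
  have "s \<in> P" if "s < b" for s
  proof -
    from that assms obtain c where "c \<in> initial_set P" "s < c"
      unfolding is_lub_def by (meson not_le)
    then show ?thesis
      unfolding initial_set_def by auto
  qed
  then show ?thesis
    unfolding initial_set_def by auto
qed

lemma continuous_inductive_eq_UNIV:
  fixes P :: "'a::linorder set"
  assumes ind: "continuous_inductive P" and no_gap: "\<not> gap (initial_set P)"
  shows "P = UNIV"
proof -
  have cut: "dedekind_cut (initial_set P)"
    using ind unfolding dedekind_cut_def continuous_inductive_def initial_set_def by force
  have "initial_set P = UNIV"
  proof (rule ccontr)
    assume "initial_set P \<noteq> UNIV"
    with cut no_gap obtain b where b: "is_lub (initial_set P) b"
      unfolding gap_def by blast
    then have "b \<in> initial_set P"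
      by (rule lub_mem_initial_set)
    with ind obtain u where "b < u" "u \<in> initial_set P"
      unfolding continuous_inductive_def initial_set_def by auto
    with b show False
      unfolding is_lub_def by force
  qed
  then show ?thesis
    using ind unfolding continuous_inductive_def initial_set_def by blast
qed

lemma gap_imp_continuous_inductive:
  fixes C :: "'a::linorder set"
  assumes "gap C"
  shows "continuous_inductive C"
proof -
  from assms have ne: "C \<noteq> {}" and down: "\<And>x y. x \<in> C \<Longrightarrow> y \<le> x \<Longrightarrow> y \<in> C"
    and no_lub: "\<And>b. \<not> is_lub C b"
    unfolding gap_def dedekind_cut_def by blast+
  have no_max: "\<exists>c\<in>C. x < c" if "x \<in> C" for x
    using that no_lub[of x] unfolding is_lub_def by (auto simp: not_le)
  have closed: "x \<in> C" if below: "\<forall>s<x. s \<in> C" for x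
  proof (rule ccontr)
    assume "x \<notin> C"
    then have "\<forall>c\<in>C. c \<le> x"
      using down by (metis nle_le)
    moreover have "x \<le> b" if b: "\<forall>c\<in>C. c \<le> b" for b
    proof (rule ccontr)
      assume "\<not> x \<le> b"
      then have "b \<in> C"
        using below by auto
      then obtain c where "c \<in> C" "b < c"
        using no_max by blast
      with b show False
        by fastforce
    qed
    ultimately show False
      using no_lub[of x] unfolding is_lub_def by blast
  qed
  have "\<forall>s<c. s \<in> C" if "c \<in> C" for c
    using that down by auto
  then show ?thesis
    unfolding continuous_inductive_def using ne closed no_max by blast
qed

theorem proposition3p2:
  fixes FI :: "'f \<Rightarrow> 'a::{linordered_ab_group_add, dense_linorder} list \<Rightarrow> 'a"
    and RI :: "'r \<Rightarrow> 'a list \<Rightarrow> bool"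
  shows "definably_complete FI RI \<longleftrightarrow> sat_DCI_scheme FI RI"
proof
  assume complete: "definably_complete FI RI"
  show "sat_DCI_scheme FI RI"
    unfolding sat_DCI_scheme_def sat_DCI_iff
  proof (intro allI impI)
    fix \<phi> :: "('f, 'r) fml" and v and e :: "nat \<Rightarrow> 'a"
    let ?P = "{a. sat FI RI (e(v := a)) \<phi>}"
    assume "continuous_inductive ?P"
    moreover have "definable FI RI (initial_set ?P)"
      by (rule definable_initial_set) (auto simp: definable_def)
    ultimately show "?P = UNIV"
      using complete continuous_inductive_eq_UNIV unfolding definably_complete_def by blast
  qed
next
  assume "sat_DCI_scheme FI RI"
  then have "C = UNIV" if "definable FI RI C" "gap C" for C :: "'a set"
    using that gap_imp_continuous_inductive
    unfolding sat_DCI_scheme_def sat_DCI_iff definable_def by blast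
  then show "definably_complete FI RI"
    unfolding definably_complete_def gap_def by blast
qed

end
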